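(* (a) ${\mathrm{stick}}\leq{\mathrm{stick}}'$. (b) If ${\mathrm{stick}}<\aleph_{\omega_1}$ then ${\mathrm{stick}}={\mathrm{stick}}'$; in particular then ${\mathrm{stick}}''\leq{\mathrm{stick}}$. (c) If $\lambda\leq\lambda'$ are cardinals then ${\mathrm{stick}}_\lambda\leq{\mathrm{stick}}_{\lambda'}$. (d) ${\mathrm{stick}}\leq{\mathrm{stick}}_{{\mathrm{stick}}}\leq{\mathrm{stick}}'$.
   Context: ${\mathrm{stick}}$ is the least cardinality of $X\subseteq[\omega_1]^{\aleph_0}$ such that every $y\in[\omega_1]^{\aleph_1}$ has a subset in $X$. ${\mathrm{stick}}'$ is the least cardinal $\kappa\geq\aleph_1$ for which there is $X\subseteq[\kappa]^{\aleph_0}$ with $|X|=\kappa$ such that every $y\in[\kappa]^{\aleph_1}$ has a subset in $X$. ${\mathrm{stick}}''$ is the least cardinal $\kappa\geq\aleph_1$ for which there is $X\subseteq[\kappa]^{\aleph_0}$ with $|X|=\kappa$ such that every $y\in[\kappa]^{\kappa}$ has a subset in $X$. For an (uncountable) cardinal $\lambda$, ${\mathrm{stick}}_\lambda$ is the least cardinality of $X\subseteq[\lambda]^{\aleph_0}$ such that every $y\in[\lambda]^{\aleph_1}$ has a subset in $X$. *)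

theory Defs
  imports Main "HOL-Library.Countable_Set"
begin

unbundle cardinal_syntax

text \<open>Cardinals are represented (up to =o) by card_of relations of sets; aleph_1 is
  cardSuc natLeq.  [K]^aleph0 = countably infinite subsets of K,
  [K]^aleph1 = subsets of K of cardinality aleph_1.\<close>

definition aleph1 :: "nat set rel" where
  "aleph1 = cardSuc natLeq"

definition omega1 :: "nat set set" where
  "omega1 = Field aleph1"

definition ctbl_subsets :: "'a set \<Rightarrow> 'a set set" where
  "ctbl_subsets K = {x. x \<subseteq> K \<and> countable x \<and> infinite x}"

definition stick_family :: "'a set \<Rightarrow> 'a set set \<Rightarrow> bool" where
  "stick_family L X \<longleftrightarrow> X \<subseteq> ctbl_subsets L \<and>
     (\<forall>y. y \<subseteq> L \<and> (card_of y) =o aleph1 \<longrightarrow> (\<exists>x\<in>X. x \<subseteq> y))"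

text \<open>stick_lambda for lambda = (card_of L): the least cardinality of a stick-family on L
  (a cardinal, represented as the card_of relation of a minimal family).\<close>
definition stick_lam :: "'a set \<Rightarrow> 'a set rel" where
  "stick_lam L = (SOME r. \<exists>X. stick_family L X \<and> r = (card_of X) \<and>
       (\<forall>X'. stick_family L X' \<longrightarrow> (card_of X) \<le>o (card_of X')))"

definition stick :: "nat set set rel" where
  "stick = stick_lam omega1"

text \<open>Candidate cardinals kappa for stick' and stick''.  They are represented by
  sets K of type nat set set (a type of size 2^2^aleph0, which is at least every
  candidate needed, as stick' and stick'' are at most 2^aleph0).\<close>
definition stick'_witness :: "'a set \<Rightarrow> bool" where
  "stick'_witness K \<longleftrightarrow> aleph1 \<le>o (card_of K) \<and>
     (\<exists>X. X \<subseteq> ctbl_subsets K \<and> (card_of X) =o (card_of K) \<and>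
        (\<forall>y. y \<subseteq> K \<and> (card_of y) =o aleph1 \<longrightarrow> (\<exists>x\<in>X. x \<subseteq> y)))"

definition stick''_witness :: "'a set \<Rightarrow> bool" where
  "stick''_witness K \<longleftrightarrow> aleph1 \<le>o (card_of K) \<and>
     (\<exists>X. X \<subseteq> ctbl_subsets K \<and> (card_of X) =o (card_of K) \<and>
        (\<forall>y. y \<subseteq> K \<and> (card_of y) =o (card_of K) \<longrightarrow> (\<exists>x\<in>X. x \<subseteq> y)))"

definition stick' :: "nat set rel" where
  "stick' = (SOME r. \<exists>K::nat set set. stick'_witness K \<and> r = (card_of K) \<and>
       (\<forall>K'::nat set set. stick'_witness K' \<longrightarrow> (card_of K) \<le>o (card_of K')))"

definition stick'' :: "nat set rel" where
  "stick'' = (SOME r. \<exists>K::nat set set. stick''_witness K \<and> r = (card_of K) \<and>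
       (\<forall>K'::nat set set. stick''_witness K' \<longrightarrow> (card_of K) \<le>o (card_of K')))"

text \<open>kappa < aleph_(omega_1), for a cardinal kappa = |Field r|: the infinite cardinals
  at most kappa form a countable set (kappa = aleph_alpha with alpha < omega_1).\<close>
definition below_aleph_omega1 :: "'a rel \<Rightarrow> bool" where
  "below_aleph_omega1 r \<longleftrightarrow> (\<exists>F::'a set set. countable F \<and>
     (\<forall>A. A \<subseteq> Field r \<and> infinite A \<longrightarrow> (\<exists>B\<in>F. (card_of A) =o (card_of B))))"

end

theory Submission
  imports Defs "HOL-Library.Countable_Set_Type"
begin

(* Parts (a), (c) and (d) are monotonicity arguments: an injection of L into L' pulls a stick
   family on L' back to one on L that is no larger, and a set K witnessing stick' carries a
   stick family of size |K|, so stick <= stick_lam K <= |K|.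

   For (b) one shows by induction on |M| that every M with |M| <= stick carries a stick family
   of size at most stick.  Well-order M in order type |M|.  If every subset of size aleph_1 is
   bounded, the proper initial segments cover them.  Otherwise M has cofinality omega_1, so the
   sizes of the initial segments are cofinal in |M|; as there are only countably many infinite
   cardinals kappa <= stick < aleph_omega_1, the sets {m. |initial segment of m| <= kappa} form
   a countable cover of M by smaller sets, one of which meets any given aleph_1-subset in an
   uncountable set.  A copy of such a family's ground set inside nat set then witnesses both
   stick' <= stick and stick'' <= stick. *)

lemma card_of_image_inj: "inj_on f A \<Longrightarrow> |f ` A| =o |A|"
  by (rule ordIso_symmetric, rule card_of_ordIsoI, rule inj_on_imp_bij_betw)

declare ordLeq_transitive [trans]

lemma Card_order_aleph1: "Card_order aleph1"
  unfolding aleph1_def by (simp add: cardSuc_Card_order natLeq_Card_order)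

lemma card_of_omega1: "|omega1| =o aleph1"
  unfolding omega1_def using Card_order_aleph1 by (rule card_of_Field_ordIso)

lemma aleph1_ordLeq_iff_uncountable: "aleph1 \<le>o |A| \<longleftrightarrow> uncountable A"
proof -
  have "aleph1 \<le>o |A| \<longleftrightarrow> natLeq <o |A|"
    unfolding aleph1_def using cardSuc_ordLess_ordLeq[OF natLeq_Card_order card_of_Card_order]
    by blast
  also have "\<dots> \<longleftrightarrow> \<not> |A| \<le>o natLeq"
    using not_ordLeq_iff_ordLess[OF natLeq_Well_order card_of_Well_order] by blast
  finally show ?thesis
    using countable_card_le_natLeq by blast
qed

lemma card_of_ordIso_aleph1: "uncountable A \<Longrightarrow> |A| \<le>o aleph1 \<Longrightarrow> |A| =o aleph1"
  using aleph1_ordLeq_iff_uncountable ordIso_iff_ordLeq by blast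

lemma uncountable_if_ordIso_aleph1: "|A| =o aleph1 \<Longrightarrow> uncountable A"
  by (simp add: ordIso_iff_ordLeq flip: aleph1_ordLeq_iff_uncountable)

lemma uncountable_omega1: "uncountable omega1"
  using aleph1_ordLeq_iff_uncountable card_of_omega1 ordIso_iff_ordLeq by blast

lemma uncountable_ex_aleph1_subset:
  assumes "uncountable A"
  obtains y where "y \<subseteq> A" "|y| =o aleph1"
proof -
  have "|omega1| \<le>o |A|"
    using assms card_of_omega1 aleph1_ordLeq_iff_uncountable ordIso_ordLeq_trans by blast
  then obtain f where f: "inj_on f omega1" "f ` omega1 \<subseteq> A"
    by (auto simp flip: card_of_ordLeq)
  have "|f ` omega1| =o aleph1"
    using ordIso_transitive[OF card_of_image_inj[OF f(1)] card_of_omega1] .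
  with f(2) show thesis by (rule that)
qed

(* The common form of stick_lam, stick' and stick'': the card_of relation of a least P-set,
   unspecified when there is no P-set. *)
definition least_card :: "('a set \<Rightarrow> bool) \<Rightarrow> 'a rel" where
  "least_card P = (SOME r. \<exists>X. P X \<and> r = |X| \<and> (\<forall>X'. P X' \<longrightarrow> |X| \<le>o |X'| ))"

lemma stick_lam_eq_least_card: "stick_lam L = least_card (stick_family L)"
  unfolding stick_lam_def least_card_def ..

lemma stick'_eq_least_card: "stick' = least_card stick'_witness"
  unfolding stick'_def least_card_def ..

lemma stick''_eq_least_card: "stick'' = least_card stick''_witness"
  unfolding stick''_def least_card_def ..

lemma least_card_spec:
  assumes "P A"
  shows "\<exists>X. P X \<and> least_card P = |X| \<and> (\<forall>X'. P X' \<longrightarrow> |X| \<le>o |X'| )"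
proof -
  have "{|X| | X. P X} \<noteq> {}" using assms by blast
  then obtain r where "r \<in> {|X| | X. P X}" "\<forall>r'\<in>{|X| | X. P X}. r \<le>o r'"
    using exists_minim_Well_order[of "{|X| | X. P X}"] card_of_Well_order by blast
  then have "\<exists>r X. P X \<and> r = |X| \<and> (\<forall>X'. P X' \<longrightarrow> |X| \<le>o |X'| )"
    by blast
  from someI_ex[OF this] show ?thesis
    unfolding least_card_def by blast
qed

lemma least_card_attained:
  assumes "P A"
  shows "P (Field (least_card P))" "least_card P = |Field (least_card P)|"
  using least_card_spec[of P, OF assms] by (auto simp: Field_card_of)

lemma least_card_ordLeq: "P X \<Longrightarrow> least_card P \<le>o |X|"
  using least_card_spec by metis

lemma stick_family_ctbl_subsets: "stick_family L (ctbl_subsets L)"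
  unfolding stick_family_def
proof (intro conjI allI impI)
  fix y assume y: "y \<subseteq> L \<and> |y| =o aleph1"
  then have "infinite y"
    using uncountable_if_ordIso_aleph1 uncountable_infinite by blast
  then obtain x where "x \<subseteq> y" "countable x" "infinite x"
    using infinite_countable_subset' by blast
  with y show "\<exists>x\<in>ctbl_subsets L. x \<subseteq> y"
    unfolding ctbl_subsets_def by blast
qed simp

lemma stick_lam_attained:
  "stick_family L (Field (stick_lam L))" "stick_lam L = |Field (stick_lam L)|"
  unfolding stick_lam_eq_least_card
  using least_card_attained[of "stick_family L", OF stick_family_ctbl_subsets] by simp_all

lemma stick_lam_ordLeq: "stick_family L X \<Longrightarrow> stick_lam L \<le>o |X|"
  unfolding stick_lam_eq_least_card by (rule least_card_ordLeq)

lemma stick_family_vimage: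
  assumes f: "inj_on f L" "f ` L \<subseteq> L'" and X': "stick_family L' X'"
  shows "stick_family L ((\<lambda>x. L \<inter> f -` x) ` {x \<in> X'. x \<subseteq> f ` L})"
  unfolding stick_family_def
proof (intro conjI allI impI subsetI)
  fix z assume "z \<in> (\<lambda>x. L \<inter> f -` x) ` {x \<in> X'. x \<subseteq> f ` L}"
  then obtain x where x: "x \<in> X'" "x \<subseteq> f ` L" "z = L \<inter> f -` x" by blast
  then have "countable x" "infinite x" "f ` z = x"
    using X' unfolding stick_family_def ctbl_subsets_def by auto
  moreover have "inj_on f z"
    using f(1) x(3) inj_on_subset by blast
  ultimately show "z \<in> ctbl_subsets L"
    using x(3) countable_image_inj_on[of f z] finite_imageI[of z f]
    unfolding ctbl_subsets_def by auto
next
  fix y assume y: "y \<subseteq> L \<and> |y| =o aleph1"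
  then have "|f ` y| =o aleph1"
    using ordIso_transitive[OF card_of_image_inj[OF inj_on_subset[OF f(1)]]] by blast
  moreover have "f ` y \<subseteq> L'" using f y by auto
  ultimately obtain x where x: "x \<in> X'" "x \<subseteq> f ` y"
    using X' unfolding stick_family_def by blast
  have "L \<inter> f -` x \<in> (\<lambda>x. L \<inter> f -` x) ` {x \<in> X'. x \<subseteq> f ` L}"
    using x y by (intro imageI) auto
  moreover have "L \<inter> f -` x \<subseteq> y"
    using x(2) y f(1) by (auto simp: inj_on_def)
  ultimately show "\<exists>z\<in>(\<lambda>x. L \<inter> f -` x) ` {x \<in> X'. x \<subseteq> f ` L}. z \<subseteq> y" ..
qed

lemma stick_lam_mono:
  assumes "|L| \<le>o |L'|"
  shows "stick_lam L \<le>o stick_lam L'"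
proof -
  obtain f where f: "inj_on f L" "f ` L \<subseteq> L'"
    using assms by (auto simp flip: card_of_ordLeq)
  let ?X' = "Field (stick_lam L')"
  have "stick_lam L \<le>o |(\<lambda>x. L \<inter> f -` x) ` {x \<in> ?X'. x \<subseteq> f ` L}|"
    by (rule stick_lam_ordLeq[OF stick_family_vimage[OF f stick_lam_attained(1)]])
  moreover have "|(\<lambda>x. L \<inter> f -` x) ` {x \<in> ?X'. x \<subseteq> f ` L}| \<le>o |?X'|"
    by (rule ordLeq_transitive[OF card_of_image card_of_mono1]) blast
  ultimately show ?thesis
    by (subst (2) stick_lam_attained(2)) (rule ordLeq_transitive)
qed

lemma stick_family_uncountable:
  assumes X: "stick_family L X" and L: "uncountable L"
  shows "uncountable X"
proof
  assume "countable X"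
  define pick where "pick x = (SOME u. u \<in> x)" for x :: "'a set"
  have "uncountable (L - pick ` X)"
    using L \<open>countable X\<close> by (simp add: uncountable_minus_countable)
  then obtain y where "y \<subseteq> L - pick ` X" "|y| =o aleph1"
    by (rule uncountable_ex_aleph1_subset)
  then obtain x where "x \<in> X" "x \<subseteq> y"
    using X unfolding stick_family_def by blast
  moreover have "x \<noteq> {}"
    using X \<open>x \<in> X\<close> unfolding stick_family_def ctbl_subsets_def by auto
  ultimately show False
    using \<open>y \<subseteq> L - pick ` X\<close> some_in_eq unfolding pick_def by blast
qed

lemmas stick_attained = stick_lam_attained[of omega1, folded stick_def]

lemma aleph1_ordLeq_stick: "aleph1 \<le>o stick"
  using stick_family_uncountable[OF stick_attained(1) uncountable_omega1]
  by (subst stick_attained(2)) (simp add: aleph1_ordLeq_iff_uncountable)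

lemma card_of_ordLeq_ctbl_subsets:
  assumes "infinite K"
  shows "|K| \<le>o |ctbl_subsets K|"
proof -
  obtain N where N: "N \<subseteq> K" "countable N" "infinite N"
    using infinite_countable_subset'[OF assms] by blast
  define g where "g a = (N - {a}) \<union> ({a} - N)" for a
  have "(g a - N) \<union> (N - g a) = {a}" for a
    unfolding g_def by blast
  then have "inj_on g K"
    by (metis inj_onI singleton_inject)
  moreover have "g a \<in> ctbl_subsets K" if "a \<in> K" for a
    using N that unfolding g_def ctbl_subsets_def by auto
  ultimately show ?thesis
    by (rule card_of_ordLeqI)
qed

lemma inj_prod_encode_Sigma: "inj (\<lambda>f :: nat \<Rightarrow> nat set. prod_encode ` Sigma UNIV f)"
proof (rule injI)
  fix f g :: "nat \<Rightarrow> nat set"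
  assume "prod_encode ` Sigma UNIV f = prod_encode ` Sigma UNIV g"
  then have "Sigma UNIV f = Sigma UNIV g"
    using inj_prod_encode by (simp add: inj_image_eq_iff)
  then show "f = g"
    by (auto simp: Sigma_def fun_eq_iff)
qed

lemma card_of_ctbl_subsets_ordLeq: "|ctbl_subsets (A :: nat set set)| \<le>o |UNIV :: nat set set|"
proof -
  have "|ctbl_subsets A| \<le>o |{X. X \<subseteq> A \<and> countable X \<and> X \<noteq> {}}|"
    by (rule card_of_mono1) (auto simp: ctbl_subsets_def)
  also have "|{X. X \<subseteq> A \<and> countable X \<and> X \<noteq> {}}| \<le>o |{f :: nat \<Rightarrow> nat set. range f \<subseteq> A}|"
    by (rule card_of_countable_sets_range)
  also have "|{f :: nat \<Rightarrow> nat set. range f \<subseteq> A}| \<le>o |UNIV :: nat set set|"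
    by (rule card_of_ordLeqI[OF inj_on_subset[OF inj_prod_encode_Sigma]]) auto
  finally show ?thesis .
qed

lemma stick_lam_ordLeq_if_stick'_witness:
  assumes "stick'_witness K"
  shows "stick_lam K \<le>o |K|"
proof -
  obtain X where "stick_family K X" "|X| =o |K|"
    using assms unfolding stick'_witness_def stick_family_def by blast
  then show ?thesis
    using ordLeq_ordIso_trans[OF stick_lam_ordLeq] by blast
qed

lemma stick'_witnessI:
  assumes K: "aleph1 \<le>o |K|" and le: "stick_lam K \<le>o |K|"
  shows "stick'_witness K"
proof -
  have "infinite K"
    using K aleph1_ordLeq_iff_uncountable uncountable_infinite by blast
  then obtain \<iota> where \<iota>: "inj_on \<iota> K" "\<iota> ` K \<subseteq> ctbl_subsets K"
    using card_of_ordLeq_ctbl_subsets[of K] by (auto simp flip: card_of_ordLeq)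
  \<comment> \<open>A minimal stick family may be smaller than K; adding a copy of K inside
    [K]^aleph0 fixes its size.\<close>
  define X where "X = Field (stick_lam K) \<union> \<iota> ` K"
  have "|Field (stick_lam K)| \<le>o |K|"
    using le by (subst (asm) stick_lam_attained(2))
  have "stick_family K X"
    using stick_lam_attained(1)[of K] \<iota>(2) unfolding X_def stick_family_def by blast
  moreover have "|X| \<le>o |K|"
    unfolding X_def using card_of_Un_ordLeq_infinite_Field[of "|K|", unfolded Field_card_of,
        OF \<open>infinite K\<close> \<open>|Field (stick_lam K)| \<le>o |K|\<close> card_of_image card_of_card_order_on] .
  moreover have "|K| \<le>o |X|"
    using \<iota>(1) unfolding X_def by (intro card_of_ordLeqI) auto
  ultimately show ?thesis
    using K unfolding stick'_witness_def stick_family_def ordIso_iff_ordLeq by blast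
qed

lemma stick''_witness_if_stick'_witness:
  assumes "stick'_witness K"
  shows "stick''_witness K"
proof -
  obtain X where K: "aleph1 \<le>o |K|" and X: "X \<subseteq> ctbl_subsets K" "|X| =o |K|"
    and cover: "\<forall>y. y \<subseteq> K \<and> |y| =o aleph1 \<longrightarrow> (\<exists>x\<in>X. x \<subseteq> y)"
    using assms unfolding stick'_witness_def by auto
  have "\<exists>x\<in>X. x \<subseteq> y" if y: "y \<subseteq> K" "|y| =o |K|" for y
  proof -
    have "aleph1 \<le>o |y|"
      using ordLeq_ordIso_trans[OF K ordIso_symmetric[OF y(2)]] .
    then obtain y' where y': "y' \<subseteq> y" "|y'| =o aleph1"
      unfolding aleph1_ordLeq_iff_uncountable by (rule uncountable_ex_aleph1_subset)
    then obtain x where "x \<in> X" "x \<subseteq> y'"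
      using cover y(1) by (meson order_trans)
    with y'(1) show ?thesis
      by blast
  qed
  with K X show ?thesis
    unfolding stick''_witness_def by auto
qed

lemma stick'_witness_UNIV: "stick'_witness (UNIV :: nat set set)"
proof (rule stick'_witnessI)
  show "aleph1 \<le>o |UNIV :: nat set set|"
    using uncountable_omega1 countable_subset[of omega1 UNIV]
    by (auto simp: aleph1_ordLeq_iff_uncountable)
  show "stick_lam (UNIV :: nat set set) \<le>o |UNIV :: nat set set|"
    using ordLeq_transitive[OF stick_lam_ordLeq[OF stick_family_ctbl_subsets]
        card_of_ctbl_subsets_ordLeq] .
qed

lemma stick'_attained: "stick'_witness (Field stick')" "stick' = |Field stick'|"
  unfolding stick'_eq_least_card
  using least_card_attained[of stick'_witness, OF stick'_witness_UNIV] by simp_all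

lemma stick'_ordLeq: "stick'_witness (K :: nat set set) \<Longrightarrow> stick' \<le>o |K|"
  unfolding stick'_eq_least_card by (rule least_card_ordLeq)

lemma stick''_ordLeq: "stick''_witness (K :: nat set set) \<Longrightarrow> stick'' \<le>o |K|"
  unfolding stick''_eq_least_card by (rule least_card_ordLeq)

lemma stick_ordLeq_stick_lam:
  assumes "aleph1 \<le>o |K|"
  shows "stick \<le>o stick_lam K"
  unfolding stick_def by (rule stick_lam_mono[OF ordIso_ordLeq_trans[OF card_of_omega1 assms]])

lemma stick_ordLeq_stick': "stick \<le>o stick'"
proof -
  have "aleph1 \<le>o |Field stick'|"
    using stick'_attained(1) unfolding stick'_witness_def by blast
  then have "stick \<le>o stick_lam (Field stick')"
    by (rule stick_ordLeq_stick_lam)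
  also have "stick_lam (Field stick') \<le>o |Field stick'|"
    by (rule stick_lam_ordLeq_if_stick'_witness[OF stick'_attained(1)])
  finally show ?thesis
    by (subst stick'_attained(2))
qed

lemma stick_lam_stick_ordLeq_stick': "stick_lam (Field stick) \<le>o stick'"
proof -
  have "|Field stick| \<le>o |Field stick'|"
    using stick_ordLeq_stick' stick_attained(2) stick'_attained(2) by simp
  then have "stick_lam (Field stick) \<le>o stick_lam (Field stick')"
    by (rule stick_lam_mono)
  also have "stick_lam (Field stick') \<le>o |Field stick'|"
    by (rule stick_lam_ordLeq_if_stick'_witness[OF stick'_attained(1)])
  finally show ?thesis
    by (subst stick'_attained(2))
qed

lemma stick_lam_ordLeq_if_covered:
  fixes M :: "'a set" and \<P> :: "'a set set" and S :: "'b set"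
  assumes S: "infinite S" and card: "|\<P>| \<le>o |S|"
    and sub: "\<And>P. P \<in> \<P> \<Longrightarrow> P \<subseteq> M" and small: "\<And>P. P \<in> \<P> \<Longrightarrow> stick_lam P \<le>o |S|"
    and cover: "\<And>y. y \<subseteq> M \<Longrightarrow> |y| =o aleph1 \<Longrightarrow> \<exists>P\<in>\<P>. uncountable (y \<inter> P)"
  shows "stick_lam M \<le>o |S|"
proof -
  define X where "X = (\<Union>P\<in>\<P>. Field (stick_lam P))"
  have "stick_family M X"
    unfolding stick_family_def
  proof (intro conjI allI impI subsetI)
    fix x assume "x \<in> X"
    then obtain P where "P \<in> \<P>" "x \<in> ctbl_subsets P"
      using stick_lam_attained(1) unfolding X_def stick_family_def by blast
    then show "x \<in> ctbl_subsets M"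
      using sub unfolding ctbl_subsets_def by blast
  next
    fix y assume y: "y \<subseteq> M \<and> |y| =o aleph1"
    then obtain P where P: "P \<in> \<P>" "uncountable (y \<inter> P)"
      using cover[OF conjunct1[OF y] conjunct2[OF y]] by blast
    have "|y \<inter> P| =o aleph1"
      using card_of_ordIso_aleph1[OF P(2) ordLeq_ordIso_trans[OF card_of_mono1 conjunct2[OF y]]]
      by blast
    then obtain x where "x \<in> Field (stick_lam P)" "x \<subseteq> y \<inter> P"
      using stick_lam_attained(1)[of P] unfolding stick_family_def by blast
    then show "\<exists>x\<in>X. x \<subseteq> y"
      using P(1) unfolding X_def by blast
  qed
  moreover have "|X| \<le>o |S|"
    unfolding X_def
  proof (rule card_of_UNION_ordLeq_infinite[OF S card], intro ballI)
    fix P assume "P \<in> \<P>"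
    then show "|Field (stick_lam P)| \<le>o |S|"
      using small by (subst (asm) stick_lam_attained(2))
  qed
  ultimately show ?thesis
    using ordLeq_transitive[OF stick_lam_ordLeq] by blast
qed

lemma card_of_Field_ordLeq_if_cofinal:
  assumes T: "infinite T" and Y: "|Y| \<le>o |T|"
    and cofinal: "\<forall>a\<in>Field r. \<exists>y\<in>Y. (a, y) \<in> r"
    and segments: "\<forall>y\<in>Y. |underS r y| \<le>o |T|"
  shows "|Field r| \<le>o |T|"
proof -
  have "Field r \<subseteq> Y \<union> (\<Union>y\<in>Y. underS r y)"
    using cofinal unfolding underS_def by blast
  moreover have "|Y \<union> (\<Union>y\<in>Y. underS r y)| \<le>o |T|"
    using card_of_Un_ordLeq_infinite_Field[of "|T|", unfolded Field_card_of, OF T Y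
        card_of_UNION_ordLeq_infinite[OF T Y segments] card_of_card_order_on] .
  ultimately show ?thesis
    using ordLeq_transitive[OF card_of_mono1] by blast
qed

lemma underS_card_unbounded_if_cofinal:
  assumes r: "Card_order r" and Y: "Y \<subseteq> Field r" "infinite Y" "|Y| <o r"
    and cofinal: "\<forall>a\<in>Field r. \<exists>y\<in>Y. (a, y) \<in> r"
    and a: "a \<in> Field r"
  shows "\<exists>a'\<in>Field r. |underS r a| <o |underS r a'| \<and> infinite (underS r a')"
proof -
  define T where "T = underS r a \<union> Y"
  have "infinite T" "infinite (Field r)"
    using Y(1,2) finite_subset unfolding T_def by auto
  have r_iso: "r =o |Field r|"
    using card_of_Field_ordIso[OF r] by (rule ordIso_symmetric)
  have "|T| <o |Field r|"
    unfolding T_def using card_of_Un_ordLess_infinite[OF \<open>infinite (Field r)\<close>]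
      ordLess_ordIso_trans[OF card_of_underS[OF r a] r_iso] ordLess_ordIso_trans[OF Y(3) r_iso]
    by blast
  then have "\<not> |Field r| \<le>o |T|"
    using not_ordLess_ordLeq by blast
  moreover have "|Y| \<le>o |T|"
    unfolding T_def by (rule card_of_mono1) blast
  ultimately obtain y where y: "y \<in> Y" "\<not> |underS r y| \<le>o |T|"
    using card_of_Field_ordLeq_if_cofinal[OF \<open>infinite T\<close> _ cofinal] by blast
  then have "|T| <o |underS r y|"
    using not_ordLeq_iff_ordLess[OF card_of_Well_order card_of_Well_order] by blast
  moreover have "|underS r a| \<le>o |T|"
    unfolding T_def by (rule card_of_mono1) blast
  ultimately have "|underS r a| <o |underS r y|" "infinite (underS r y)"
    using ordLeq_ordLess_trans card_of_ordLeq_finite[OF ordLess_imp_ordLeq] \<open>infinite T\<close> by blast+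
  with y(1) Y(1) show ?thesis
    by blast
qed

lemma card_of_underS_ordLeq_subset_underS:
  assumes r: "Well_order r" and c: "c \<in> Field r" "\<not> |underS r c| \<le>o |B|"
  shows "{m \<in> Field r. |underS r m| \<le>o |B|} \<subseteq> underS r c"
proof
  fix m assume m: "m \<in> {m \<in> Field r. |underS r m| \<le>o |B|}"
  show "m \<in> underS r c"
  proof (rule ccontr)
    assume "m \<notin> underS r c"
    with m c have "(c, m) \<in> r"
      using wo_rel.in_notinI[unfolded wo_rel_def, OF r] unfolding underS_def by blast
    then have "|underS r c| \<le>o |underS r m|"
      using r underS_incr card_of_mono1
      unfolding well_order_on_def linear_order_on_def partial_order_on_def preorder_on_def
      by metis
    with m c(2) show False
      using ordLeq_transitive by blast
  qed
qed

lemma ordIso_representative: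
  assumes F: "\<And>A. A \<subseteq> S \<Longrightarrow> infinite A \<Longrightarrow> \<exists>B\<in>F. |A| =o |B|"
    and A: "|A| \<le>o |S|" "infinite A"
  shows "\<exists>B\<in>F. |A| =o |B|"
proof -
  obtain h where h: "inj_on h A" "h ` A \<subseteq> S"
    using A(1) by (auto simp flip: card_of_ordLeq)
  then obtain B where "B \<in> F" "|h ` A| =o |B|"
    using F A(2) finite_imageD by blast
  then show ?thesis
    using ordIso_transitive[OF ordIso_symmetric[OF card_of_image_inj[OF h(1)]]] by blast
qed

lemma countable_cover_if_underS_card_unbounded:
  fixes r :: "'a rel" and S :: "'b set"
  assumes r: "Card_order r" and S: "below_aleph_omega1 |S|" "|Field r| \<le>o |S|"
    and unbounded: "\<And>a. a \<in> Field r \<Longrightarrow>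
      \<exists>a'\<in>Field r. |underS r a| <o |underS r a'| \<and> infinite (underS r a')"
  shows "\<exists>\<P>. countable \<P> \<and> Field r \<subseteq> \<Union>\<P> \<and> (\<forall>P\<in>\<P>. P \<subseteq> Field r \<and> |P| <o r)"
proof -
  obtain F :: "'b set set" where F: "countable F"
    "\<And>A. A \<subseteq> S \<Longrightarrow> infinite A \<Longrightarrow> \<exists>B\<in>F. |A| =o |B|"
    using S(1) unfolding below_aleph_omega1_def Field_card_of by blast
  define seg where "seg B = {m \<in> Field r. |underS r m| \<le>o |B|}" for B :: "'b set"
  define \<P> where "\<P> = seg ` {B \<in> F. seg B \<noteq> Field r}"
  have "countable \<P>"
    unfolding \<P>_def using F(1) by simp
  moreover have "|P| <o r" if "P \<in> \<P>" for P
  proof -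
    obtain B c where "P = seg B" "c \<in> Field r" "c \<notin> seg B"
      using \<open>P \<in> \<P>\<close> unfolding \<P>_def seg_def by blast
    then have "P \<subseteq> underS r c"
      using card_of_underS_ordLeq_subset_underS[OF card_order_on_well_order_on[OF r]]
      unfolding seg_def by blast
    then show ?thesis
      using ordLeq_ordLess_trans[OF card_of_mono1 card_of_underS[OF r \<open>c \<in> Field r\<close>]] by blast
  qed
  moreover have "\<exists>P\<in>\<P>. a \<in> P" if a: "a \<in> Field r" for a
  proof -
    obtain a1 where a1: "a1 \<in> Field r" "|underS r a| <o |underS r a1|" "infinite (underS r a1)"
      using unbounded[OF a] by blast
    obtain a2 where a2: "a2 \<in> Field r" "|underS r a1| <o |underS r a2|"
      using unbounded[OF a1(1)] by blast
    have "|underS r a1| \<le>o |S|"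
      using ordLeq_transitive[OF card_of_mono1 S(2)] underS_Field by (metis subsetI)
    then obtain B where B: "B \<in> F" and a1_B: "|underS r a1| =o |B|"
      using ordIso_representative[OF F(2)] a1(3) by blast
    have "a \<in> seg B"
      unfolding seg_def using a ordLeq_ordIso_trans[OF ordLess_imp_ordLeq[OF a1(2)] a1_B] by blast
    moreover have "a2 \<notin> seg B"
      unfolding seg_def using ordIso_ordLess_trans[OF ordIso_symmetric[OF a1_B] a2(2)]
        not_ordLess_ordLeq by blast
    ultimately show ?thesis
      unfolding \<P>_def using B(1) a2(1) by blast
  qed
  moreover have "P \<subseteq> Field r" if "P \<in> \<P>" for P
    using that unfolding \<P>_def seg_def by blast
  ultimately show ?thesis
    by (intro exI[of _ \<P>]) blast
qed

lemma cofinal_if_unbounded: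
  assumes r: "Well_order r" and Y: "Y \<subseteq> Field r"
    and unbounded: "\<forall>a\<in>Field r. \<not> Y \<subseteq> underS r a"
  shows "\<forall>a\<in>Field r. \<exists>y\<in>Y. (a, y) \<in> r"
proof
  fix a assume a: "a \<in> Field r"
  then obtain y where y: "y \<in> Y" "y \<notin> underS r a"
    using unbounded by blast
  then have "(y, a) \<notin> r \<or> y = a"
    unfolding underS_def by blast
  then have "(a, y) \<in> r"
    using a y(1) Y by (intro wo_rel.in_notinI[unfolded wo_rel_def, OF r]) auto
  with y(1) show "\<exists>y\<in>Y. (a, y) \<in> r" ..
qed

lemma uncountable_Int_if_countable_cover:
  assumes "countable \<P>" "y \<subseteq> \<Union>\<P>" "uncountable y"
  shows "\<exists>P\<in>\<P>. uncountable (y \<inter> P)"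
proof (rule ccontr)
  assume "\<not> ?thesis"
  then have "countable (\<Union>P\<in>\<P>. y \<inter> P)"
    using assms(1) by blast
  moreover have "y = (\<Union>P\<in>\<P>. y \<inter> P)"
    using assms(2) by blast
  ultimately show False
    using assms(3) by simp
qed

lemma card_of_ordLeq_if_countable: "countable A \<Longrightarrow> infinite S \<Longrightarrow> |A| \<le>o |S|"
  using ordLeq_transitive infinite_iff_natLeq_ordLeq countable_card_le_natLeq by metis

lemma small_cover_of_aleph1_subsets:
  fixes M :: "'a set" and S :: "'b set"
  assumes S: "below_aleph_omega1 |S|" "aleph1 \<le>o |S|"
    and M: "aleph1 <o |M|" "|M| \<le>o |S|"
  shows "\<exists>\<P>. |\<P>| \<le>o |S| \<and> (\<forall>P\<in>\<P>. P \<subseteq> M \<and> |P| <o |M| ) \<and>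
    (\<forall>y. y \<subseteq> M \<and> |y| =o aleph1 \<longrightarrow> (\<exists>P\<in>\<P>. uncountable (y \<inter> P)))"
proof (cases "\<forall>y. y \<subseteq> M \<and> |y| =o aleph1 \<longrightarrow> (\<exists>a\<in>M. y \<subseteq> underS |M| a)")
  case True
  have "|underS |M| ` M| \<le>o |S|"
    using ordLeq_transitive[OF card_of_image M(2)] .
  moreover have "underS |M| a \<subseteq> M \<and> |underS |M| a| <o |M|" if "a \<in> M" for a
    using card_of_underS[OF card_of_Card_order, of a M] that underS_Field[of _ "|M|" a]
    by (auto simp: Field_card_of)
  moreover have "\<exists>P\<in>underS |M| ` M. uncountable (y \<inter> P)" if "y \<subseteq> M" "|y| =o aleph1" for y
    using True that uncountable_if_ordIso_aleph1 by (metis Int_absorb2 imageI)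
  ultimately show ?thesis
    by blast
next
  case False
  then obtain Y where Y: "Y \<subseteq> M" "|Y| =o aleph1" and unbounded: "\<forall>a\<in>M. \<not> Y \<subseteq> underS |M| a"
    by blast
  \<comment> \<open>M has cofinality omega_1, so the sizes of initial segments are cofinal in |M|.\<close>
  have cofinal: "\<forall>a\<in>M. \<exists>y\<in>Y. (a, y) \<in> |M|"
    using cofinal_if_unbounded[of "|M|" Y, unfolded Field_card_of, OF card_of_well_order_on Y(1) unbounded] .
  have "infinite Y"
    using uncountable_if_ordIso_aleph1[OF Y(2)] uncountable_infinite by blast
  have "|Y| <o |M|"
    using ordIso_ordLess_trans[OF Y(2) M(1)] .
  obtain \<P> where \<P>: "countable \<P>" "M \<subseteq> \<Union>\<P>" "\<forall>P\<in>\<P>. P \<subseteq> M \<and> |P| <o |M|"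
    using countable_cover_if_underS_card_unbounded[of "|M|" S, unfolded Field_card_of,
        OF card_of_card_order_on S(1) M(2)
        underS_card_unbounded_if_cofinal[of "|M|" Y, unfolded Field_card_of,
          OF card_of_card_order_on Y(1) \<open>infinite Y\<close> \<open>|Y| <o |M|\<close> cofinal]]
    by blast
  have "infinite S"
    using S(2) aleph1_ordLeq_iff_uncountable uncountable_infinite by blast
  with \<P>(1) have "|\<P>| \<le>o |S|"
    by (rule card_of_ordLeq_if_countable)
  moreover have "\<exists>P\<in>\<P>. uncountable (y \<inter> P)" if "y \<subseteq> M" "|y| =o aleph1" for y
    using uncountable_Int_if_countable_cover[OF \<P>(1)] \<P>(2) that uncountable_if_ordIso_aleph1
    by blast
  ultimately show ?thesis
    using \<P>(3) by blast
qed

lemma stick_lam_ordLeq_if_below_aleph_omega1: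
  fixes M :: "'a set" and S :: "'b set"
  assumes S: "below_aleph_omega1 |S|" "stick \<le>o |S|"
  shows "|M| \<le>o |S| \<Longrightarrow> stick_lam M \<le>o |S|"
  using wf_inv_image[OF wf_ordLess, of card_of]
proof (induction M rule: wf_induct_rule)
  case (less M)
  have "aleph1 \<le>o |S|"
    using ordLeq_transitive[OF aleph1_ordLeq_stick S(2)] .
  then have "infinite S"
    using aleph1_ordLeq_iff_uncountable uncountable_infinite by blast
  show ?case
  proof (cases "|M| \<le>o aleph1")
    case True
    have "stick_lam M \<le>o stick"
      unfolding stick_def
      by (rule stick_lam_mono[OF ordLeq_ordIso_trans[OF True ordIso_symmetric[OF card_of_omega1]]])
    then show ?thesis
      using ordLeq_transitive[OF _ S(2)] by blast
  next
    case False
    then have "aleph1 <o |M|"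
      using not_ordLeq_iff_ordLess[OF card_order_on_well_order_on[OF Card_order_aleph1] card_of_Well_order]
      by blast
    then obtain \<P> where \<P>: "|\<P>| \<le>o |S|" "\<forall>P\<in>\<P>. P \<subseteq> M \<and> |P| <o |M|"
      "\<forall>y. y \<subseteq> M \<and> |y| =o aleph1 \<longrightarrow> (\<exists>P\<in>\<P>. uncountable (y \<inter> P))"
      using small_cover_of_aleph1_subsets[OF S(1) \<open>aleph1 \<le>o |S|\<close> _ less.prems] by blast
    have small: "stick_lam P \<le>o |S|" if "P \<in> \<P>" for P
    proof -
      have "|P| <o |M|"
        using \<P>(2) that by blast
      then have "(P, M) \<in> inv_image ordLess card_of"
        by simp
      then show ?thesis
        by (rule less.IH) (rule ordLeq_transitive[OF ordLess_imp_ordLeq[OF \<open>|P| <o |M|\<close>] less.prems])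
    qed
    show ?thesis
      by (rule stick_lam_ordLeq_if_covered[OF \<open>infinite S\<close> \<P>(1)]) (use \<P>(2,3) small in auto)
  qed
qed

lemma stick'_witness_of_card_stick:
  assumes "below_aleph_omega1 stick"
  obtains K :: "nat set set" where "|K| =o stick" "stick'_witness K"
proof -
  define X0 where "X0 = Field stick"
  have stick_eq: "stick = |X0|"
    unfolding X0_def by (rule stick_attained(2))
  have "X0 \<subseteq> ctbl_subsets omega1"
    using stick_attained(1) unfolding X0_def stick_family_def by blast
  then have "|X0| \<le>o |UNIV :: nat set set|"
    by (rule ordLeq_transitive[OF card_of_mono1 card_of_ctbl_subsets_ordLeq])
  then obtain g :: "nat set set \<Rightarrow> nat set" where g: "inj_on g X0"
    by (metis card_of_ordLeq)
  define K where "K = g ` X0"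
  have K_X0: "|K| =o |X0|"
    unfolding K_def by (rule card_of_image_inj[OF g])
  have "stick_lam K \<le>o |X0|"
    using assms ordIso_imp_ordLeq[OF K_X0]
    by (intro stick_lam_ordLeq_if_below_aleph_omega1) (simp_all add: stick_eq ordLeq_refl[OF card_of_Card_order])
  then have "stick_lam K \<le>o |K|"
    by (rule ordLeq_ordIso_trans[OF _ ordIso_symmetric[OF K_X0]])
  moreover have "aleph1 \<le>o |K|"
    using aleph1_ordLeq_stick unfolding stick_eq
    by (rule ordLeq_ordIso_trans[OF _ ordIso_symmetric[OF K_X0]])
  ultimately have "stick'_witness K"
    by (rule stick'_witnessI[rotated])
  moreover have "|K| =o stick"
    unfolding stick_eq by (rule K_X0)
  ultimately show thesis
    using that by blast
qed

lemma stick_ordIso_stick'_if_below_aleph_omega1: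
  assumes "below_aleph_omega1 stick"
  shows "stick =o stick'" and "stick'' \<le>o stick"
proof -
  obtain K :: "nat set set" where K: "|K| =o stick" "stick'_witness K"
    using stick'_witness_of_card_stick[OF assms] .
  have "stick' \<le>o stick"
    using ordLeq_ordIso_trans[OF stick'_ordLeq[OF K(2)] K(1)] .
  with stick_ordLeq_stick' show "stick =o stick'"
    unfolding ordIso_iff_ordLeq by blast
  show "stick'' \<le>o stick"
    using ordLeq_ordIso_trans[OF stick''_ordLeq[OF stick''_witness_if_stick'_witness[OF K(2)]] K(1)] .
qed

theorem lemma1p1:
  fixes L :: "'a set" and L' :: "'b set"
  shows "stick \<le>o stick'
     \<and> (below_aleph_omega1 stick \<longrightarrow> stick =o stick' \<and> stick'' \<le>o stick)
     \<and> (uncountable L \<and> (card_of L) \<le>o (card_of L') \<longrightarrow> stick_lam L \<le>o stick_lam L')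
     \<and> stick \<le>o stick_lam (Field stick) \<and> stick_lam (Field stick) \<le>o stick'"
proof (intro conjI impI)
  show "stick \<le>o stick'"
    by (rule stick_ordLeq_stick')
  show "stick =o stick'" "stick'' \<le>o stick" if "below_aleph_omega1 stick"
    using stick_ordIso_stick'_if_below_aleph_omega1[OF that] by simp_all
  \<comment> \<open>Monotonicity holds for every L.\<close>
  show "stick_lam L \<le>o stick_lam L'" if "uncountable L \<and> |L| \<le>o |L'|"
    using that by (blast intro: stick_lam_mono)
  show "stick \<le>o stick_lam (Field stick)"
    using aleph1_ordLeq_stick by (intro stick_ordLeq_stick_lam) (simp flip: stick_attained(2))
  show "stick_lam (Field stick) \<le>o stick'"
    by (rule stick_lam_stick_ordLeq_stick')
qed

end
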